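(* Let $G$ be a simple (prop-int, tree)-graph, let $v$ be a pendant vertex of $G$ (a vertex of degree exactly $1$), and let $\widehat{G}$ be obtained from $G$ by attaching a degree-2-tail of length $\ell\ge 1$ at $v$, i.e., adding new vertices $u_1,\dots,u_\ell$ and edges $vu_1$ and $u_iu_{i+1}$ for $1\le i\le \ell-1$. Then $\widehat{G}$ is a simple (prop-int, tree)-graph.
   Context: A simple undirected graph is a (prop-int, tree)-graph if every connected component of it is a proper interval graph or a tree. *)

theory Defs
  imports Complex_Main
begin

definition simple_graph :: "'a set \<Rightarrow> ('a \<Rightarrow> 'a \<Rightarrow> bool) \<Rightarrow> bool" where
  "simple_graph V E \<longleftrightarrow> finite V \<and> (\<forall>x y. E x y \<longrightarrow> x \<in> V \<and> y \<in> V)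
     \<and> (\<forall>x y. E x y \<longrightarrow> E y x) \<and> (\<forall>x. \<not> E x x)"

definition degree :: "'a set \<Rightarrow> ('a \<Rightarrow> 'a \<Rightarrow> bool) \<Rightarrow> 'a \<Rightarrow> nat" where
  "degree V E v = card {w \<in> V. E v w}"

definition induced :: "('a \<Rightarrow> 'a \<Rightarrow> bool) \<Rightarrow> 'a set \<Rightarrow> 'a \<Rightarrow> 'a \<Rightarrow> bool" where
  "induced E C = (\<lambda>x y. E x y \<and> x \<in> C \<and> y \<in> C)"

definition component :: "'a set \<Rightarrow> ('a \<Rightarrow> 'a \<Rightarrow> bool) \<Rightarrow> 'a \<Rightarrow> 'a set" where
  "component V E x = {y \<in> V. E\<^sup>*\<^sup>* x y}"

definition connected_graph :: "'a set \<Rightarrow> ('a \<Rightarrow> 'a \<Rightarrow> bool) \<Rightarrow> bool" where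
  "connected_graph V E \<longleftrightarrow> V \<noteq> {} \<and> (\<forall>x\<in>V. \<forall>y\<in>V. E\<^sup>*\<^sup>* x y)"

definition has_cycle :: "'a set \<Rightarrow> ('a \<Rightarrow> 'a \<Rightarrow> bool) \<Rightarrow> bool" where
  "has_cycle V E \<longleftrightarrow> (\<exists>cs. length cs \<ge> 3 \<and> distinct cs \<and> set cs \<subseteq> V
      \<and> (\<forall>i. Suc i < length cs \<longrightarrow> E (cs ! i) (cs ! Suc i)) \<and> E (last cs) (hd cs))"

definition is_tree :: "'a set \<Rightarrow> ('a \<Rightarrow> 'a \<Rightarrow> bool) \<Rightarrow> bool" where
  "is_tree V E \<longleftrightarrow> connected_graph V E \<and> \<not> has_cycle V E"

definition proper_interval_graph :: "'a set \<Rightarrow> ('a \<Rightarrow> 'a \<Rightarrow> bool) \<Rightarrow> bool" where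
  "proper_interval_graph V E \<longleftrightarrow> (\<exists>l r :: 'a \<Rightarrow> real.
      (\<forall>x\<in>V. l x \<le> r x)
    \<and> (\<forall>x\<in>V. \<forall>y\<in>V. x \<noteq> y \<longrightarrow> (E x y \<longleftrightarrow> l x \<le> r y \<and> l y \<le> r x))
    \<and> (\<forall>x\<in>V. \<forall>y\<in>V. \<not> ({l x..r x} \<subset> {l y..r y})))"

definition propint_tree_graph :: "'a set \<Rightarrow> ('a \<Rightarrow> 'a \<Rightarrow> bool) \<Rightarrow> bool" where
  "propint_tree_graph V E \<longleftrightarrow> (\<forall>x\<in>V. let C = component V E x in
      proper_interval_graph C (induced E C) \<or> is_tree C (induced E C))"

definition tail_vertices :: "(nat \<Rightarrow> 'a) \<Rightarrow> nat \<Rightarrow> 'a set" where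
  "tail_vertices u l = u ` {1..l}"

definition tail_edges :: "('a \<Rightarrow> 'a \<Rightarrow> bool) \<Rightarrow> 'a \<Rightarrow> (nat \<Rightarrow> 'a) \<Rightarrow> nat \<Rightarrow> 'a \<Rightarrow> 'a \<Rightarrow> bool" where
  "tail_edges E v u l = (\<lambda>x y. E x y
      \<or> (x = v \<and> y = u 1) \<or> (x = u 1 \<and> y = v)
      \<or> (\<exists>i. 1 \<le> i \<and> i < l \<and> ((x = u i \<and> y = u (Suc i)) \<or> (x = u (Suc i) \<and> y = u i))))"

end

theory Submission
  imports Defs
begin

(* Attaching the tail one vertex at a time, it suffices to add a single new vertex x adjacent
   only to a pendant vertex v; the end of the tail is again pendant, so induction on the length
   applies. Only the component C of v changes, and it becomes C + x. Trees stay trees, and a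
   component on at most two vertices is a tree. Otherwise take a proper interval model of C,
   reflected so that the unique neighbour w of v starts no later than v. Walking from v through
   the connected graph C shows that every other interval ends before v's interval begins, and the
   presence of a third vertex forces w to start strictly before v. Hence v's interval has the
   largest endpoints; stretching it to the right by 1 and placing x's interval just after it gives
   a proper interval model of C + x. *)

definition add_pendant :: "('a \<Rightarrow> 'a \<Rightarrow> bool) \<Rightarrow> 'a \<Rightarrow> 'a \<Rightarrow> 'a \<Rightarrow> 'a \<Rightarrow> bool" where
  "add_pendant E v x = (\<lambda>a b. E a b \<or> (a = v \<and> b = x) \<or> (a = x \<and> b = v))"

section \<open>Reachability and components\<close>

lemma rtranclp_closed:
  assumes "R\<^sup>*\<^sup>* a b" and "a \<in> S" and "\<And>c d. c \<in> S \<Longrightarrow> R c d \<Longrightarrow> d \<in> S"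
  shows "b \<in> S"
  using assms(1,2) by (induction rule: rtranclp_induct) (auto intro: assms(3))

lemma simple_graph_rtranclp_sym:
  assumes "simple_graph V E" and "E\<^sup>*\<^sup>* a b"
  shows "E\<^sup>*\<^sup>* b a"
proof -
  have "symp E" using assms(1) unfolding simple_graph_def by (blast intro: sympI)
  then show ?thesis using assms(2) by (blast dest: symp_rtranclp sympD)
qed

lemma mem_component_iff:
  assumes "simple_graph V E" and "a \<in> V"
  shows "b \<in> component V E a \<longleftrightarrow> E\<^sup>*\<^sup>* a b"
  using assms rtranclp_closed[of E a b V] unfolding component_def simple_graph_def by blast

lemma component_connected:
  assumes "simple_graph V E" and "a \<in> V"
  shows "connected_graph (component V E a) (induced E (component V E a))"
proof -
  let ?C = "component V E a"
  have C: "b \<in> ?C \<longleftrightarrow> E\<^sup>*\<^sup>* a b" for b using mem_component_iff[OF assms] .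
  have from_a: "(induced E ?C)\<^sup>*\<^sup>* a b" if "E\<^sup>*\<^sup>* a b" for b
    using that
  proof (induction rule: rtranclp_induct)
    case (step b c)
    then have "induced E ?C b c" unfolding induced_def C by auto
    with step.IH show ?case by simp
  qed simp
  have "symp (induced E ?C)"
    using assms(1) unfolding simple_graph_def induced_def by (blast intro: sympI)
  then have to_a: "(induced E ?C)\<^sup>*\<^sup>* b a" if "E\<^sup>*\<^sup>* a b" for b
    using from_a[OF that] by (blast dest: symp_rtranclp sympD)
  show ?thesis
    unfolding connected_graph_def
  proof (intro conjI ballI)
    show "?C \<noteq> {}" using C[of a] by auto
    fix b c assume "b \<in> ?C" "c \<in> ?C"
    then show "(induced E ?C)\<^sup>*\<^sup>* b c" using to_a from_a C by (blast intro: rtranclp_trans)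
  qed
qed

lemma component_add_pendant_new:
  assumes G: "simple_graph V E" and v: "v \<in> V" and x: "x \<notin> V"
    and y: "y \<in> insert x (component V E v)"
  shows "component (insert x V) (add_pendant E v x) y = insert x (component V E v)"
proof -
  let ?F = "add_pendant E v x" and ?S = "insert x (component V E v)"
  have C: "b \<in> component V E v \<longleftrightarrow> E\<^sup>*\<^sup>* v b" for b using mem_component_iff[OF G v] .
  have closed: "d \<in> ?S" if c: "c \<in> ?S" and cd: "?F c d" for c d
  proof -
    consider "E c d" | "c = v" "d = x" | "c = x" "d = v"
      using cd unfolding add_pendant_def by blast
    then show ?thesis
    proof cases
      case 1
      then have "c \<noteq> x" using G x unfolding simple_graph_def by blast
      with 1 show ?thesis using c C by (blast intro: rtranclp.rtrancl_into_rtrancl)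
    qed (use C in auto)
  qed
  have "E \<le> ?F" unfolding add_pendant_def by auto
  then have from_v: "?F\<^sup>*\<^sup>* v b" if "b \<in> ?S" for b
    using that C mono_rtranclp[of E ?F] unfolding add_pendant_def by auto
  have "symp ?F" using G unfolding simple_graph_def add_pendant_def by (blast intro: sympI)
  then have to_v: "?F\<^sup>*\<^sup>* y v" using from_v[OF y] by (blast dest: symp_rtranclp sympD)
  have S: "?S \<subseteq> insert x V" unfolding component_def by blast
  show ?thesis
  proof (intro set_eqI iffI)
    fix z assume "z \<in> component (insert x V) ?F y"
    then have "?F\<^sup>*\<^sup>* y z" unfolding component_def by blast
    then show "z \<in> ?S" using y closed by (rule rtranclp_closed)
  next
    fix z assume z: "z \<in> ?S"
    have "?F\<^sup>*\<^sup>* y z" using to_v from_v[OF z] by (rule rtranclp_trans)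
    then show "z \<in> component (insert x V) ?F y"
      unfolding component_def[of "insert x V"] using S z by blast
  qed
qed

lemma component_add_pendant_old:
  assumes G: "simple_graph V E" and v: "v \<in> V" and x: "x \<notin> V"
    and y: "y \<in> V" "y \<notin> component V E v"
  shows "component (insert x V) (add_pendant E v x) y = component V E y"
proof -
  let ?F = "add_pendant E v x" and ?D = "component V E y"
  have D: "b \<in> ?D \<longleftrightarrow> E\<^sup>*\<^sup>* y b" for b using mem_component_iff[OF G y(1)] .
  have "v \<notin> ?D"
    using y simple_graph_rtranclp_sym[OF G] mem_component_iff[OF G] v by blast
  moreover have "x \<notin> ?D" using x unfolding component_def by blast
  ultimately have closed: "d \<in> ?D" if "c \<in> ?D" "?F c d" for c d
    using that unfolding add_pendant_def D by (blast intro: rtranclp.rtrancl_into_rtrancl)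
  have "E \<le> ?F" unfolding add_pendant_def by auto
  then have mono: "?F\<^sup>*\<^sup>* y b" if "b \<in> ?D" for b
    using that D mono_rtranclp[of E ?F] by blast
  show ?thesis
  proof (intro set_eqI iffI)
    fix z assume "z \<in> component (insert x V) ?F y"
    then have "?F\<^sup>*\<^sup>* y z" unfolding component_def by blast
    moreover have "y \<in> ?D" using D by blast
    ultimately show "z \<in> ?D" using closed by (rule rtranclp_closed)
  next
    fix z assume z: "z \<in> ?D"
    then have "z \<in> V" unfolding component_def by blast
    then show "z \<in> component (insert x V) ?F y"
      using mono[OF z] unfolding component_def[of "insert x V"] by blast
  qed
qed

lemma induced_add_pendant:
  assumes "simple_graph V E" and "x \<notin> V" and "v \<in> C" and "C \<subseteq> V"
  shows "induced (add_pendant E v x) (insert x C) = add_pendant (induced E C) v x"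
proof (intro ext)
  fix a b
  have "E a b \<Longrightarrow> a \<in> V \<and> b \<in> V" using assms(1) unfolding simple_graph_def by blast
  then show "induced (add_pendant E v x) (insert x C) a b = add_pendant (induced E C) v x a b"
    using assms(2-4) unfolding induced_def add_pendant_def by blast
qed

lemma induced_add_pendant_outside:
  assumes "x \<notin> D"
  shows "induced (add_pendant E v x) D = induced E D"
  using assms unfolding induced_def add_pendant_def by blast

section \<open>Cycles and trees\<close>

lemma cycle_successor_predecessor:
  assumes len: "length cs \<ge> 3" and dist: "distinct cs"
    and step: "\<forall>i. Suc i < length cs \<longrightarrow> G (cs ! i) (cs ! Suc i)"
    and close: "G (last cs) (hd cs)"
    and z: "z \<in> set cs"
  shows "\<exists>a b. a \<noteq> b \<and> G z a \<and> G b z"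
proof -
  define n where "n = length cs"
  obtain k where k: "k < n" "cs ! k = z" using z unfolding n_def by (meson in_set_conv_nth)
  have n: "n \<ge> 3" using len unfolding n_def .
  have "cs \<noteq> []" using len by auto
  then have last: "last cs = cs ! (n - 1)" and hd: "hd cs = cs ! 0"
    unfolding n_def by (simp_all add: last_conv_nth hd_conv_nth)
  have step': "G (cs ! i) (cs ! Suc i)" if "Suc i < n" for i using step that unfolding n_def by blast
  have neq: "cs ! i \<noteq> cs ! j" if "i < n" "j < n" "i \<noteq> j" for i j
    using dist that unfolding n_def by (simp add: nth_eq_iff_index_eq)
  consider "k = 0" | "k = n - 1" | "0 < k" "k < n - 1" using k n by linarith
  then show ?thesis
  proof cases
    case 1
    have "G z (cs ! 1)" using step'[of 0] n k 1 by simp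
    moreover have "G (cs ! (n - 1)) z" using close last hd k 1 by simp
    moreover have "cs ! 1 \<noteq> cs ! (n - 1)" using neq n by simp
    ultimately show ?thesis by blast
  next
    case 2
    have "G z (cs ! 0)" using close last hd k 2 by simp
    moreover have "G (cs ! (n - 2)) z" using step'[of "n - 2"] n k 2 by (simp add: Suc_diff_Suc numeral_2_eq_2)
    moreover have "cs ! 0 \<noteq> cs ! (n - 2)" using neq n by simp
    ultimately show ?thesis by blast
  next
    case 3
    have "G z (cs ! Suc k)" using step'[of k] k 3 by simp
    moreover have "G (cs ! (k - 1)) z" using step'[of "k - 1"] k 3 by simp
    moreover have "cs ! Suc k \<noteq> cs ! (k - 1)" using neq 3 by simp
    ultimately show ?thesis by blast
  qed
qed

lemma has_cycle_avoids_leaf: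
  assumes "has_cycle W G" and "\<And>a. G z a \<Longrightarrow> a = y" and "\<And>b. G b z \<Longrightarrow> b = y"
  shows "has_cycle (W - {z}) G"
proof -
  obtain cs where cs: "length cs \<ge> 3" "distinct cs" "set cs \<subseteq> W"
      "\<forall>i. Suc i < length cs \<longrightarrow> G (cs ! i) (cs ! Suc i)" "G (last cs) (hd cs)"
    using assms(1) unfolding has_cycle_def by blast
  have "z \<notin> set cs" using cycle_successor_predecessor[OF cs(1,2,4,5)] assms(2,3) by blast
  then have "set cs \<subseteq> W - {z}" using cs(3) by blast
  then show ?thesis using cs(1,2,4,5) unfolding has_cycle_def by blast
qed

lemma has_cycle_mono:
  assumes "has_cycle W G" and "\<And>a b. a \<in> W \<Longrightarrow> b \<in> W \<Longrightarrow> G a b \<Longrightarrow> H a b"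
  shows "has_cycle W H"
proof -
  obtain cs where cs: "length cs \<ge> 3" "distinct cs" "set cs \<subseteq> W"
      "\<forall>i. Suc i < length cs \<longrightarrow> G (cs ! i) (cs ! Suc i)" "G (last cs) (hd cs)"
    using assms(1) unfolding has_cycle_def by blast
  have W: "cs ! i \<in> W" if "i < length cs" for i using cs(3) that by auto
  show ?thesis
    unfolding has_cycle_def
  proof (intro exI[of _ cs] conjI allI impI)
    fix i assume "Suc i < length cs"
    then show "H (cs ! i) (cs ! Suc i)" using cs(4) W assms(2) by simp
  next
    have "cs \<noteq> []" using cs(1) by auto
    then have "last cs \<in> W" "hd cs \<in> W" using cs(3) by auto
    then show "H (last cs) (hd cs)" using cs(5) assms(2) by blast
  qed (use cs in auto)
qed

lemma has_cycle_card_ge_3: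
  assumes "has_cycle W G" and "finite W"
  shows "3 \<le> card W"
proof -
  obtain cs where "length cs \<ge> 3" "distinct cs" "set cs \<subseteq> W"
    using assms(1) unfolding has_cycle_def by blast
  then have "3 \<le> card (set cs)" by (simp add: distinct_card)
  also have "\<dots> \<le> card W" using card_mono[OF assms(2)] \<open>set cs \<subseteq> W\<close> .
  finally show ?thesis .
qed

lemma connected_graph_add_pendant:
  assumes "connected_graph C G" and v: "v \<in> C"
  shows "connected_graph (insert x C) (add_pendant G v x)"
proof -
  let ?F = "add_pendant G v x"
  have "G \<le> ?F" unfolding add_pendant_def by auto
  then have old: "?F\<^sup>*\<^sup>* a b" if "a \<in> C" "b \<in> C" for a b
    using assms(1) that mono_rtranclp[of G ?F] unfolding connected_graph_def by blast
  have "?F v x" "?F x v" unfolding add_pendant_def by auto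
  then have "?F\<^sup>*\<^sup>* a x" "?F\<^sup>*\<^sup>* x a" if "a \<in> C" for a
    using old[OF that v] old[OF v that] by (metis rtranclp.rtrancl_into_rtrancl, metis converse_rtranclp_into_rtranclp)
  then show ?thesis unfolding connected_graph_def using old by blast
qed

lemma is_tree_add_pendant:
  assumes tree: "is_tree C G" and v: "v \<in> C" and x: "x \<notin> C"
    and edges: "\<And>a b. G a b \<Longrightarrow> a \<in> C \<and> b \<in> C"
  shows "is_tree (insert x C) (add_pendant G v x)"
proof -
  let ?F = "add_pendant G v x"
  have "\<not> has_cycle (insert x C) ?F"
  proof
    assume "has_cycle (insert x C) ?F"
    then have "has_cycle (insert x C - {x}) ?F"
      by (rule has_cycle_avoids_leaf[where y = v]) (use x edges in \<open>auto simp: add_pendant_def\<close>)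
    then have "has_cycle C ?F" using x by simp
    then have "has_cycle C G" by (rule has_cycle_mono) (use x in \<open>auto simp: add_pendant_def\<close>)
    then show False using tree unfolding is_tree_def by blast
  qed
  then show ?thesis
    using tree connected_graph_add_pendant[OF _ v] unfolding is_tree_def by blast
qed

section \<open>Proper interval models\<close>

definition proper_interval_model ::
    "'a set \<Rightarrow> ('a \<Rightarrow> 'a \<Rightarrow> bool) \<Rightarrow> ('a \<Rightarrow> real) \<Rightarrow> ('a \<Rightarrow> real) \<Rightarrow> bool" where
  "proper_interval_model V E l r \<longleftrightarrow> (\<forall>x\<in>V. l x \<le> r x)
    \<and> (\<forall>x\<in>V. \<forall>y\<in>V. x \<noteq> y \<longrightarrow> (E x y \<longleftrightarrow> l x \<le> r y \<and> l y \<le> r x))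
    \<and> (\<forall>x\<in>V. \<forall>y\<in>V. l x \<le> l y \<longleftrightarrow> r x \<le> r y)"

lemma atLeastAtMost_not_psubset_iff:
  fixes a b c d :: real
  assumes "a \<le> b" and "c \<le> d"
  shows "\<not> {a..b} \<subset> {c..d} \<and> \<not> {c..d} \<subset> {a..b} \<longleftrightarrow>
    (a \<le> c \<longleftrightarrow> b \<le> d) \<and> (c \<le> a \<longleftrightarrow> d \<le> b)"
  unfolding atLeastatMost_psubset_iff using assms by argo

lemma proper_interval_graph_iff_model:
  "proper_interval_graph V E \<longleftrightarrow> (\<exists>l r. proper_interval_model V E l r)"
proof -
  have "(\<forall>x\<in>V. \<forall>y\<in>V. \<not> {l x..r x} \<subset> {l y..r y}) \<longleftrightarrow> (\<forall>x\<in>V. \<forall>y\<in>V. l x \<le> l y \<longleftrightarrow> r x \<le> r y)"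
    if lr: "\<forall>x\<in>V. l x \<le> r x" for l r :: "'a \<Rightarrow> real"
  proof -
    have pair: "\<not> {l x..r x} \<subset> {l y..r y} \<and> \<not> {l y..r y} \<subset> {l x..r x} \<longleftrightarrow>
        (l x \<le> l y \<longleftrightarrow> r x \<le> r y) \<and> (l y \<le> l x \<longleftrightarrow> r y \<le> r x)" if "x \<in> V" "y \<in> V" for x y
      using atLeastAtMost_not_psubset_iff lr that by simp
    show ?thesis
    proof (rule iffI; intro ballI)
      fix x y assume "\<forall>x\<in>V. \<forall>y\<in>V. \<not> {l x..r x} \<subset> {l y..r y}" "x \<in> V" "y \<in> V"
      then show "l x \<le> l y \<longleftrightarrow> r x \<le> r y" using pair by meson
    next
      fix x y assume "\<forall>x\<in>V. \<forall>y\<in>V. l x \<le> l y \<longleftrightarrow> r x \<le> r y" "x \<in> V" "y \<in> V"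
      then show "\<not> {l x..r x} \<subset> {l y..r y}" using pair by meson
    qed
  qed
  then show ?thesis unfolding proper_interval_graph_def proper_interval_model_def by blast
qed

lemma proper_interval_modelD:
  assumes "proper_interval_model V E l r"
  shows "x \<in> V \<Longrightarrow> l x \<le> r x"
    and "x \<in> V \<Longrightarrow> y \<in> V \<Longrightarrow> x \<noteq> y \<Longrightarrow> E x y \<longleftrightarrow> l x \<le> r y \<and> l y \<le> r x"
    and "x \<in> V \<Longrightarrow> y \<in> V \<Longrightarrow> l x \<le> l y \<longleftrightarrow> r x \<le> r y"
  using assms unfolding proper_interval_model_def by blast+

lemma proper_interval_model_reflect:
  assumes "proper_interval_model V E l r"
  shows "proper_interval_model V E (\<lambda>x. - r x) (\<lambda>x. - l x)"
  unfolding proper_interval_model_def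
  using proper_interval_modelD[OF assms] by (smt (verit))

lemma proper_interval_model_stretch_right:
  assumes model: "proper_interval_model C G l r" and v: "v \<in> C"
    and top: "\<And>a. a \<in> C \<Longrightarrow> a \<noteq> v \<Longrightarrow> l a < l v" and "0 \<le> \<delta>"
  shows "proper_interval_model C G l (r(v := r v + \<delta>))"
proof -
  note M = proper_interval_modelD[OF model]
  have "r a < r v" if "a \<in> C" "a \<noteq> v" for a
    using M(3)[OF v that(1)] top[OF that] by linarith
  then show ?thesis
    unfolding proper_interval_model_def using M top v \<open>0 \<le> \<delta>\<close> by (smt (verit) fun_upd_apply)
qed

lemma proper_interval_model_append_right:
  assumes model: "proper_interval_model C G l r" and v: "v \<in> C" and x: "x \<notin> C"
    and top: "\<And>a. a \<in> C \<Longrightarrow> a \<noteq> v \<Longrightarrow> r a < r v" and lv: "l v < r v" and t: "r v < t"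
    and Gx: "\<And>a. \<not> G x a \<and> \<not> G a x"
  shows "proper_interval_model (insert x C) (add_pendant G v x) (l(x := r v)) (r(x := t))"
proof -
  note M = proper_interval_modelD[OF model]
  have "l a < r v" if "a \<in> C" for a
    using M(1)[OF that] top[OF that] lv by (cases "a = v") auto
  then show ?thesis
    unfolding proper_interval_model_def add_pendant_def using M top v x Gx t
    by (smt (verit) fun_upd_apply insert_iff)
qed

context
  fixes C :: "'a set" and G :: "'a \<Rightarrow> 'a \<Rightarrow> bool" and l r :: "'a \<Rightarrow> real" and v w :: 'a
  assumes model: "proper_interval_model C G l r"
    and edges: "\<And>a b. G a b \<Longrightarrow> a \<in> C \<and> b \<in> C"
    and conn: "\<And>y. y \<in> C \<Longrightarrow> G\<^sup>*\<^sup>* v y"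
    and v: "v \<in> C" and vw: "G v w" and pendant: "\<And>y. G v y \<Longrightarrow> y = w"
    and order: "l w \<le> l v"
begin

lemma proper_interval_model_pendant_left:
  assumes "y \<in> C" and "y \<noteq> v" and "y \<noteq> w"
  shows "r y < l v"
proof -
  note M = proper_interval_modelD[OF model]
  have "r w \<le> r v" using M(3) order edges[OF vw] v by blast
  then have below: "r a \<le> r v" if "a = v \<or> a = w \<or> r a < l v" for a
    using that M(1)[OF v] by auto
  have "y \<in> C \<and> (y = v \<or> y = w \<or> r y < l v)" using conn[OF assms(1)]
  proof (induction rule: rtranclp_induct)
    case base then show ?case using v by blast
  next
    case (step y z)
    have z: "z \<in> C" using edges step(2) by blast
    have "r z < l v" if "z \<noteq> v" "z \<noteq> w"
    proof (cases "y = z")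
      case True then show ?thesis using step.IH that by blast
    next
      case False
      have "l z \<le> r y" using M(2)[of y z] step.IH z False step(2) by blast
      moreover have "r y \<le> r v" using below step.IH by blast
      moreover have "\<not> (l v \<le> r z \<and> l z \<le> r v)" using M(2)[OF v z] pendant that by blast
      ultimately show ?thesis by linarith
    qed
    then show ?case using z by blast
  qed
  then show ?thesis using assms by blast
qed

lemma proper_interval_model_pendant_neighbour_less:
  assumes "z \<in> C" and "z \<noteq> v" and "z \<noteq> w"
  shows "l w < l v"
proof -
  obtain c d where cd: "G c d" "c \<in> {v, w}" "d \<notin> {v, w}"
    using rtranclp_closed[OF conn[OF assms(1)], of "{v, w}"] assms by blast
  then have "c = w" using pendant by blast
  then have "G w d" "d \<noteq> w" using cd by auto
  moreover have "d \<in> C" "w \<in> C" using edges \<open>G w d\<close> by auto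
  ultimately have "l w \<le> r d" using proper_interval_modelD(2)[OF model] by blast
  also have "r d < l v" using proper_interval_model_pendant_left \<open>d \<in> C\<close> cd(3) by blast
  finally show ?thesis .
qed

lemma proper_interval_model_add_pendant:
  assumes x: "x \<notin> C" and z: "z \<in> C" "z \<noteq> v" "z \<noteq> w"
  shows "proper_interval_model (insert x C) (add_pendant G v x)
           (l(x := r v + 1)) (r(v := r v + 1, x := r v + 2))"
proof -
  note M = proper_interval_modelD[OF model]
  have "w \<in> C" using edges vw by blast
  have top: "l a < l v" if "a \<in> C" "a \<noteq> v" for a
  proof (cases "a = w")
    case True then show ?thesis using proper_interval_model_pendant_neighbour_less z by blast
  next
    case False then show ?thesis
      using proper_interval_model_pendant_left[OF that False] M(1)[OF that(1)] by linarith
  qed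
  let ?r = "r(v := r v + 1)"
  have "proper_interval_model C G l ?r"
    using proper_interval_model_stretch_right[OF model v top] by simp
  moreover have "?r a < ?r v" if "a \<in> C" "a \<noteq> v" for a
    using M(3)[OF that(1) v] top[OF that] that(2) by simp
  moreover have "l v < ?r v" using M(1)[OF v] by simp
  ultimately have "proper_interval_model (insert x C) (add_pendant G v x) (l(x := ?r v)) (?r(x := r v + 2))"
    by (rule proper_interval_model_append_right[OF _ v x]) (use x edges in auto)
  then show ?thesis by simp
qed

end

section \<open>Attaching pendant vertices and tails\<close>

lemma proper_interval_graph_add_pendant:
  assumes pig: "proper_interval_graph C G"
    and edges: "\<And>a b. G a b \<Longrightarrow> a \<in> C \<and> b \<in> C"
    and conn: "\<And>y. y \<in> C \<Longrightarrow> G\<^sup>*\<^sup>* v y"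
    and v: "v \<in> C" and vw: "G v w" and pendant: "\<And>y. G v y \<Longrightarrow> y = w"
    and x: "x \<notin> C" and z: "z \<in> C" "z \<noteq> v" "z \<noteq> w"
  shows "proper_interval_graph (insert x C) (add_pendant G v x)"
proof -
  obtain l r where model: "proper_interval_model C G l r" and order: "l w \<le> l v"
  proof -
    obtain l r where lr: "proper_interval_model C G l r"
      using pig proper_interval_graph_iff_model by blast
    show thesis
    proof (cases "l w \<le> l v")
      case True then show ?thesis using lr that by blast
    next
      case False
      have "w \<in> C" using edges vw by blast
      moreover have "l v \<le> l w" using False by linarith
      ultimately have "- r w \<le> - r v" using proper_interval_modelD(3)[OF lr v] by simp
      then show ?thesis using that[OF proper_interval_model_reflect[OF lr]] by blast
    qed
  qed
  show ?thesis
    using proper_interval_model_add_pendant[OF model edges conn v vw pendant order x z]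
      proper_interval_graph_iff_model by blast
qed

lemma propint_or_tree_add_pendant:
  assumes "proper_interval_graph C G \<or> is_tree C G"
    and conn: "connected_graph C G" and fin: "finite C"
    and edges: "\<And>a b. G a b \<Longrightarrow> a \<in> C \<and> b \<in> C"
    and v: "v \<in> C" and vw: "G v w" and pendant: "\<And>y. G v y \<Longrightarrow> y = w"
    and x: "x \<notin> C"
  shows "proper_interval_graph (insert x C) (add_pendant G v x)
    \<or> is_tree (insert x C) (add_pendant G v x)"
proof -
  consider "is_tree C G" | z where "proper_interval_graph C G" "z \<in> C" "z \<noteq> v" "z \<noteq> w"
  proof (cases "C \<subseteq> {v, w}")
    case True
    have "card C \<le> card {v, w}" using True by (rule card_mono[rotated]) simp
    also have "\<dots> \<le> 2" by (simp add: card_insert_if)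
    finally have "card C \<le> 2" .
    then have "\<not> has_cycle C G" using has_cycle_card_ge_3 fin by fastforce
    then show ?thesis using that(1) conn unfolding is_tree_def by blast
  next
    case False
    then show ?thesis using that assms(1) by blast
  qed
  then show ?thesis
  proof cases
    case 1
    then show ?thesis using is_tree_add_pendant[OF _ v x edges] by blast
  next
    case (2 z)
    have "G\<^sup>*\<^sup>* v y" if "y \<in> C" for y using conn v that unfolding connected_graph_def by blast
    then show ?thesis
      using proper_interval_graph_add_pendant[OF 2(1) edges _ v vw pendant x 2(2-4)] by blast
  qed
qed

lemma simple_graph_add_pendant:
  assumes "simple_graph V E" and "v \<in> V" and "x \<notin> V"
  shows "simple_graph (insert x V) (add_pendant E v x)"
  using assms unfolding simple_graph_def add_pendant_def by blast

lemma degree_add_pendant_new: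
  assumes "simple_graph V E" and "v \<in> V" and "x \<notin> V"
  shows "degree (insert x V) (add_pendant E v x) x = 1"
proof -
  have "{y \<in> insert x V. add_pendant E v x x y} = {v}"
    using assms unfolding simple_graph_def add_pendant_def by blast
  then show ?thesis unfolding degree_def by simp
qed

lemma propint_tree_graph_add_pendant:
  assumes G: "simple_graph V E" and propint: "propint_tree_graph V E"
    and v: "v \<in> V" and deg: "degree V E v = 1" and x: "x \<notin> V"
  shows "propint_tree_graph (insert x V) (add_pendant E v x)"
proof -
  let ?F = "add_pendant E v x" and ?C = "component V E v"
  have EV: "E a b \<Longrightarrow> a \<in> V \<and> b \<in> V" for a b using G unfolding simple_graph_def by blast
  obtain w where w: "{y \<in> V. E v y} = {w}"
    using deg unfolding degree_def by (meson card_1_singletonE)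
  have CV: "?C \<subseteq> V" and vC: "v \<in> ?C" and wC: "w \<in> ?C"
    using w v unfolding component_def by auto
  have "proper_interval_graph (insert x ?C) (add_pendant (induced E ?C) v x)
      \<or> is_tree (insert x ?C) (add_pendant (induced E ?C) v x)"
  proof (rule propint_or_tree_add_pendant)
    show "proper_interval_graph ?C (induced E ?C) \<or> is_tree ?C (induced E ?C)"
      using propint v unfolding propint_tree_graph_def Let_def by blast
    show "connected_graph ?C (induced E ?C)" using component_connected[OF G v] .
    show "finite ?C" using CV G unfolding simple_graph_def by (auto intro: finite_subset)
    show "induced E ?C v w" using w vC wC unfolding induced_def by blast
    show "y = w" if "induced E ?C v y" for y using that w EV unfolding induced_def by blast
  qed (use vC CV x in \<open>auto simp: induced_def\<close>)
  then have new: "proper_interval_graph (insert x ?C) (induced ?F (insert x ?C))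
      \<or> is_tree (insert x ?C) (induced ?F (insert x ?C))"
    using induced_add_pendant[OF G x vC CV] by simp
  show ?thesis
    unfolding propint_tree_graph_def Let_def
  proof
    fix y assume y: "y \<in> insert x V"
    show "proper_interval_graph (component (insert x V) ?F y) (induced ?F (component (insert x V) ?F y))
      \<or> is_tree (component (insert x V) ?F y) (induced ?F (component (insert x V) ?F y))"
    proof (cases "y \<in> insert x ?C")
      case True
      then show ?thesis using component_add_pendant_new[OF G v x] new by simp
    next
      case False
      then have "y \<in> V" "y \<notin> ?C" using y by auto
      moreover have "x \<notin> component V E y" using x unfolding component_def by blast
      ultimately show ?thesis
        using component_add_pendant_old[OF G v x] induced_add_pendant_outside[of x] propint
        unfolding propint_tree_graph_def Let_def by simp
    qed
  qed
qed

lemma add_pendant_at_pendant: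
  assumes "simple_graph V E" and "propint_tree_graph V E" and "v \<in> V" and "degree V E v = 1"
    and "x \<notin> V"
  shows "simple_graph (insert x V) (add_pendant E v x)
    \<and> propint_tree_graph (insert x V) (add_pendant E v x)
    \<and> degree (insert x V) (add_pendant E v x) x = 1"
  using simple_graph_add_pendant[OF assms(1,3,5)] propint_tree_graph_add_pendant[OF assms]
    degree_add_pendant_new[OF assms(1,3,5)] by blast

lemma tail_edges_1: "tail_edges E v u 1 = add_pendant E v (u 1)"
  unfolding tail_edges_def add_pendant_def by auto

lemma tail_edges_Suc:
  assumes "1 \<le> l"
  shows "tail_edges E v u (Suc l) = add_pendant (tail_edges E v u l) (u l) (u (Suc l))"
  unfolding tail_edges_def add_pendant_def using assms by (auto intro!: ext simp: less_Suc_eq)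

lemma tail_vertices_Suc: "tail_vertices u (Suc l) = insert (u (Suc l)) (tail_vertices u l)"
  unfolding tail_vertices_def by (simp add: atLeastAtMostSuc_conv)

theorem lemma10:
  fixes V :: "'a set" and E :: "'a \<Rightarrow> 'a \<Rightarrow> bool" and v :: 'a and u :: "nat \<Rightarrow> 'a" and l :: nat
  assumes "simple_graph V E"
    and "propint_tree_graph V E"
    and "v \<in> V" and "degree V E v = 1"
    and "l \<ge> 1"
    and "inj_on u {1..l}"
    and "u ` {1..l} \<inter> V = {}"
  shows "simple_graph (V \<union> tail_vertices u l) (tail_edges E v u l)
    \<and> propint_tree_graph (V \<union> tail_vertices u l) (tail_edges E v u l)"
proof -
  have "simple_graph (V \<union> tail_vertices u l) (tail_edges E v u l)
    \<and> propint_tree_graph (V \<union> tail_vertices u l) (tail_edges E v u l)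
    \<and> degree (V \<union> tail_vertices u l) (tail_edges E v u l) (u l) = 1"
    using \<open>l \<ge> 1\<close> assms(6,7)
  proof (induction l rule: nat_induct_at_least)
    case base
    have "u 1 \<notin> V" using base.prems(2) by auto
    then show ?case
      unfolding tail_edges_1 using add_pendant_at_pendant[OF assms(1-4)] by (simp add: tail_vertices_def)
  next
    case (Suc l)
    let ?V = "V \<union> tail_vertices u l"
    have "inj_on u {1..l}" using Suc.prems(1) by (rule inj_on_subset) auto
    moreover have "u ` {1..l} \<inter> V = {}" using Suc.prems(2) by fastforce
    ultimately have IH: "simple_graph ?V (tail_edges E v u l) \<and> propint_tree_graph ?V (tail_edges E v u l)
        \<and> degree ?V (tail_edges E v u l) (u l) = 1"
      using Suc.IH by blast
    have "u (Suc l) \<notin> V" using Suc.prems(2) by fastforce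
    moreover have "u (Suc l) \<notin> u ` {1..l}" using inj_on_image_mem_iff[OF Suc.prems(1)] by simp
    ultimately have "u (Suc l) \<notin> ?V" unfolding tail_vertices_def by blast
    moreover have "u l \<in> ?V" using Suc.hyps unfolding tail_vertices_def by auto
    ultimately show ?case
      unfolding tail_edges_Suc[OF Suc.hyps] tail_vertices_Suc
      using add_pendant_at_pendant[of ?V] IH by simp
  qed
  then show ?thesis by blast
qed

end
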